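(* Let $\mathfrak{n}$ be a $2$-step nilpotent real Lie algebra with center $\mathfrak{z}$ and commutator $\mathfrak{n}'$, and let $J$ be a linear map with $J^2=-I$ and $J\mathfrak{n}'\subset\mathfrak{z}$. Let $\langle\cdot,\cdot\rangle$ be a $J$-compatible inner product, $\mathfrak{z}_0=\mathfrak{n}'+J\mathfrak{n}'$, $\mathfrak{v}=\mathfrak{z}_0^{\perp}$, $J_{\mathfrak{v}}=J|_{\mathfrak{v}}$, $\dim\mathfrak{v}=2n$, and $j:\mathfrak{z}_0\to\mathfrak{so}(\mathfrak{v})$ defined by $\langle j(z)v,w\rangle=\langle z,[v,w]\rangle$. Put $\mathfrak{n}'_J=\mathfrak{n}'\cap J\mathfrak{n}'$, let $\mathfrak{z}_1$ be the orthogonal complement of $\mathfrak{n}'_J$ in $\mathfrak{n}'$ (so that $J\mathfrak{z}_1\perp\mathfrak{n}'$), and let $\mathfrak{b}\subset\mathfrak{n}'_J$ be any subspace with orthogonal decomposition $\mathfrak{n}'_J=\mathfrak{b}\oplus J\mathfrak{b}$. The following are equivalent: (i) $J$ is integrable; (ii) $j(z)\in\mathfrak{u}(n)$ for all $z\in\mathfrak{z}_1$, and $j(Jz)-\tfrac12[J_{\mathfrak{v}},j(z)]\in\mathfrak{u}(n)$ for all $z\in\mathfrak{b}$; (iii) $j(z)\in\mathfrak{u}(n)$ for all $z\in\mathfrak{z}_1$, and $j(Jz)_-=\tfrac12[J_{\mathfrak{v}},j(z)]$ for all $z\in\mathfrak{b}$.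
   Context: $J$ integrable means $N_J(x,y)=[x,y]+J([Jx,y]+[x,Jy])-[Jx,Jy]=0$ for all $x,y$. $\mathfrak{u}(n)=\{T\in\mathfrak{so}(\mathfrak{v}): T J_{\mathfrak{v}}=J_{\mathfrak{v}}T\}$. For $T\in\operatorname{End}(\mathfrak{v})$, $T_{\pm}=\tfrac12(T\mp J_{\mathfrak{v}}TJ_{\mathfrak{v}})$, so $T=T_++T_-$ with $T_+$ commuting and $T_-$ anticommuting with $J_{\mathfrak{v}}$. $[A,B]=AB-BA$. A Lie algebra $\mathfrak{n}$ is $2$-step nilpotent if it is non-abelian and $\mathfrak{n}'\subset\mathfrak{z}$. *)

theory Defs
  imports "HOL-Analysis.Analysis"
begin

text \<open>The underlying space is a finite-dimensional real inner product space
  (type class euclidean_space); its inner product plays the role of the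
  J-compatible inner product.\<close>

definition lie_algebra :: "('a::real_vector \<Rightarrow> 'a \<Rightarrow> 'a) \<Rightarrow> bool" where
  "lie_algebra br \<longleftrightarrow> bilinear br \<and> (\<forall>x. br x x = 0) \<and>
     (\<forall>x y z. br x (br y z) + br y (br z x) + br z (br x y) = 0)"

definition center :: "('a::real_vector \<Rightarrow> 'a \<Rightarrow> 'a) \<Rightarrow> 'a set" where
  "center br = {x. \<forall>y. br x y = 0}"

definition derived :: "('a::real_vector \<Rightarrow> 'a \<Rightarrow> 'a) \<Rightarrow> 'a set" where
  "derived br = span {br x y | x y. True}"

definition two_step_nilpotent :: "('a::real_vector \<Rightarrow> 'a \<Rightarrow> 'a) \<Rightarrow> bool" where
  "two_step_nilpotent br \<longleftrightarrow> lie_algebra br \<and> (\<exists>x y. br x y \<noteq> 0) \<and>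
     derived br \<subseteq> center br"

definition integrable :: "('a::real_vector \<Rightarrow> 'a \<Rightarrow> 'a) \<Rightarrow> ('a \<Rightarrow> 'a) \<Rightarrow> bool" where
  "integrable br J \<longleftrightarrow>
     (\<forall>x y. br x y + J (br (J x) y + br x (J y)) - br (J x) (J y) = 0)"

definition zz0 :: "('a::real_vector \<Rightarrow> 'a \<Rightarrow> 'a) \<Rightarrow> ('a \<Rightarrow> 'a) \<Rightarrow> 'a set" where
  "zz0 br J = {a + J b | a b. a \<in> derived br \<and> b \<in> derived br}"

definition vv :: "('a::real_inner \<Rightarrow> 'a \<Rightarrow> 'a) \<Rightarrow> ('a \<Rightarrow> 'a) \<Rightarrow> 'a set" where
  "vv br J = {x. \<forall>z \<in> zz0 br J. inner x z = 0}"

definition jmap :: "('a::real_inner \<Rightarrow> 'a \<Rightarrow> 'a) \<Rightarrow> ('a \<Rightarrow> 'a) \<Rightarrow> 'a \<Rightarrow> 'a \<Rightarrow> 'a" where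
  "jmap br J z x = (THE u. u \<in> vv br J \<and> (\<forall>w \<in> vv br J. inner u w = inner z (br x w)))"

definition nJ :: "('a::real_vector \<Rightarrow> 'a \<Rightarrow> 'a) \<Rightarrow> ('a \<Rightarrow> 'a) \<Rightarrow> 'a set" where
  "nJ br J = derived br \<inter> J ` derived br"

definition zz1 :: "('a::real_inner \<Rightarrow> 'a \<Rightarrow> 'a) \<Rightarrow> ('a \<Rightarrow> 'a) \<Rightarrow> 'a set" where
  "zz1 br J = {x \<in> derived br. \<forall>y \<in> nJ br J. inner x y = 0}"

text \<open>T (an endomorphism of the subspace V, represented by a function on the
  whole space) lies in u(n): it maps V to V, is skew-symmetric on V and
  commutes with J on V.\<close>
definition in_u :: "'a::real_inner set \<Rightarrow> ('a \<Rightarrow> 'a) \<Rightarrow> ('a \<Rightarrow> 'a) \<Rightarrow> bool" where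
  "in_u V J T \<longleftrightarrow> (\<forall>x\<in>V. T x \<in> V) \<and>
     (\<forall>x\<in>V. \<forall>y\<in>V. inner (T x) y = - inner x (T y)) \<and>
     (\<forall>x\<in>V. T (J x) = J (T x))"

definition opcomm :: "('a::real_vector \<Rightarrow> 'a) \<Rightarrow> ('a \<Rightarrow> 'a) \<Rightarrow> 'a \<Rightarrow> 'a" where
  "opcomm A B = (\<lambda>x. A (B x) - B (A x))"

definition minus_part :: "('a::real_vector \<Rightarrow> 'a) \<Rightarrow> ('a \<Rightarrow> 'a) \<Rightarrow> 'a \<Rightarrow> 'a" where
  "minus_part J T = (\<lambda>x. (1/2) *\<^sub>R (T x + J (T (J x))))"

end

theory Submission
  imports Defs
begin

(* Put M(x,y) = [Jx,y] + [x,Jy], so that the Nijenhuis tensor is N(x,y) = [x,y] - [Jx,Jy] + J M(x,y),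
   with [x,y] - [Jx,Jy] = - M(Jx,y) and N(Jx,y) = - J N(x,y).  Paired with w, the failure of j(z)
   to commute with J is <z, M(x,w)>, the failure of the operator in (ii) to commute with J is
   - <z, N(x,w)>, and the two sides of (iii) differ by <Jz, N(x,w)>/2; as z0 is central and
   J-invariant, these vanish for all x in v iff they vanish for all x.  Hence (ii) and (iii) both
   say that M is orthogonal to z1, i.e. takes values in n'_J, and that N is orthogonal to b, hence
   to b + Jb = n'_J.  The first condition puts N into the J-invariant space n'_J, so together they
   force N = 0.  Conversely, N = 0 gives M(x,y) = J([x,y] - [Jx,Jy]) \<in> n' \<inter> J n'. *)

lemma orthogonal_decomp_subspace:
  fixes x :: "'a::euclidean_space"
  assumes "subspace S"
  obtains y r where "y \<in> S" "\<forall>w\<in>S. inner r w = 0" "x = y + r"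
proof -
  obtain y r where "y \<in> span S" "\<And>w. w \<in> span S \<Longrightarrow> orthogonal r w" "x = y + r"
    using orthogonal_subspace_decomp_exists by blast
  moreover have "span S = S" using assms by (rule span_eq_iff[THEN iffD2])
  ultimately show ?thesis using that unfolding orthogonal_def by auto
qed

lemma ex1_inner_representative:
  fixes a :: "'a::euclidean_space"
  assumes "subspace V"
  shows "\<exists>!u. u \<in> V \<and> (\<forall>w\<in>V. inner u w = inner a w)"
proof -
  obtain y r where y: "y \<in> V" and r: "\<forall>w\<in>V. inner r w = 0" and a: "a = y + r"
    using orthogonal_decomp_subspace[OF assms] by blast
  show ?thesis
  proof (rule ex1I)
    show "y \<in> V \<and> (\<forall>w\<in>V. inner y w = inner a w)"
      using y r a by (simp add: inner_add_left)
  next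
    fix u assume u: "u \<in> V \<and> (\<forall>w\<in>V. inner u w = inner a w)"
    have "u - y \<in> V" using u y assms subspace_diff by blast
    then have "inner (u - y) (u - y) = 0"
      using u y r a by (simp add: inner_diff_left inner_add_left)
    then show "u = y" by simp
  qed
qed

lemma in_subspace_if_orthogonal_to_complement:
  fixes m :: "'a::euclidean_space"
  assumes "subspace S" "subspace E" "E \<subseteq> S" "m \<in> S"
    and "\<And>z. z \<in> S \<Longrightarrow> \<forall>y\<in>E. inner z y = 0 \<Longrightarrow> inner z m = 0"
  shows "m \<in> E"
proof -
  obtain q r where q: "q \<in> E" and r: "\<forall>w\<in>E. inner r w = 0" and m: "m = q + r"
    using orthogonal_decomp_subspace[OF assms(2)] by blast
  have "r \<in> S" using m q assms(1,3,4) subspace_diff by (metis add_diff_cancel_left' subsetD)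
  then have "inner r m = 0" using assms(5) r by blast
  moreover have "inner r q = 0" using r q by blast
  ultimately have "inner r r = 0" using m by (simp add: inner_add_right)
  then show ?thesis using m q by simp
qed

lemma all_inner_diff_eq_0_iff: "(\<forall>w. inner (a - b) w = 0) \<longleftrightarrow> a = (b::'a::real_inner)"
  by (metis inner_eq_zero_iff right_minus_eq inner_zero_left)

lemma in_u_iff_commutes:
  assumes "\<forall>x\<in>V. T x \<in> V" and "\<forall>x\<in>V. \<forall>y\<in>V. inner (T x) y = - inner x (T y)"
  shows "in_u V J T \<longleftrightarrow> (\<forall>x\<in>V. \<forall>w. inner (T (J x) - J (T x)) w = 0)"
  using assms unfolding in_u_def all_inner_diff_eq_0_iff by blast

locale two_step_almost_hermitian =
  fixes br :: "'a::euclidean_space \<Rightarrow> 'a \<Rightarrow> 'a" and J :: "'a \<Rightarrow> 'a"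
  assumes two_step: "two_step_nilpotent br"
    and linear_J: "linear J" and J_J [simp]: "J (J x) = - x"
    and J_derived_central: "J ` derived br \<subseteq> center br"
    and inner_J_J [simp]: "inner (J x) (J y) = inner x y"
begin

abbreviation "D \<equiv> derived br"
abbreviation "Z0 \<equiv> zz0 br J"
abbreviation "V \<equiv> vv br J"
abbreviation "NJ \<equiv> nJ br J"
abbreviation "Z1 \<equiv> zz1 br J"
abbreviation "jm \<equiv> jmap br J"

lemma bilinear_br: "bilinear br"
  using two_step unfolding two_step_nilpotent_def lie_algebra_def by auto

lemmas br_simps [simp] =
  bilinear_ladd[OF bilinear_br] bilinear_radd[OF bilinear_br]
  bilinear_lneg[OF bilinear_br] bilinear_rneg[OF bilinear_br]
  bilinear_lsub[OF bilinear_br] bilinear_rsub[OF bilinear_br]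
  bilinear_lmul[OF bilinear_br] bilinear_rmul[OF bilinear_br]
  bilinear_lzero[OF bilinear_br] bilinear_rzero[OF bilinear_br]

lemmas J_simps [simp] =
  linear_add[OF linear_J] linear_neg[OF linear_J] linear_diff[OF linear_J]
  linear_scale[OF linear_J] linear_0[OF linear_J]

lemma br_anticomm: "br x y = - br y x"
proof -
  have alt: "\<And>x. br x x = 0"
    using two_step unfolding two_step_nilpotent_def lie_algebra_def by auto
  have "br x x + br x y + (br y x + br y y) = 0" using alt[of "x + y"] by (simp add: algebra_simps)
  then have "br x y + br y x = 0" by (simp add: alt)
  then show ?thesis by (simp add: eq_neg_iff_add_eq_0)
qed

lemma inner_J_left: "inner (J x) y = - inner x (J y)"
  using inner_J_J[of x "J y"] by simp

lemma subspace_derived: "subspace D"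
  unfolding derived_def by (rule subspace_span)

lemma br_in_derived: "br x y \<in> D"
  unfolding derived_def by (rule span_base) auto

lemma subspace_center: "subspace (center br)"
  unfolding subspace_def center_def by auto

lemma Z0_eq: "z \<in> Z0 \<longleftrightarrow> (\<exists>a c. z = a + J c \<and> a \<in> D \<and> c \<in> D)"
  unfolding zz0_def by blast

lemma subspace_Z0: "subspace Z0"
proof -
  have "Z0 = (\<lambda>(a, c). a + J c) ` (D \<times> D)"
    unfolding zz0_def by auto
  also have "subspace \<dots>"
    by (rule linear_subspace_image)
      (auto intro!: linearI subspace_Times subspace_derived simp: scaleR_add_right)
  finally show ?thesis .
qed

lemma J_Z0: "z \<in> Z0 \<Longrightarrow> J z \<in> Z0"
  unfolding Z0_eq by (metis J_J J_simps(1) add.commute subspace_derived subspace_neg)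

lemma Z0_central: "z \<in> Z0 \<Longrightarrow> br z y = 0" "z \<in> Z0 \<Longrightarrow> br y z = 0"
proof -
  assume "z \<in> Z0"
  then obtain a c where "z = a + J c" "a \<in> D" "c \<in> D" unfolding Z0_eq by blast
  moreover have "D \<subseteq> center br"
    using two_step unfolding two_step_nilpotent_def by blast
  ultimately have "z \<in> center br"
    using J_derived_central subspace_center subspace_add by blast
  then show "br z y = 0" "br y z = 0"
    unfolding center_def by (auto simp: br_anticomm[of y z])
qed

lemma Z0_V_decomp:
  obtains y where "y \<in> Z0" "x - y \<in> V"
proof -
  obtain y r where "y \<in> Z0" "\<forall>w\<in>Z0. inner r w = 0" "x = y + r"
    using orthogonal_decomp_subspace[OF subspace_Z0] by blast
  with that show ?thesis unfolding vv_def by auto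
qed

lemma subspace_V: "subspace V"
  unfolding subspace_def vv_def by (simp add: inner_add_left)

lemma J_V: "x \<in> V \<Longrightarrow> J x \<in> V"
  unfolding vv_def by (simp add: inner_J_left J_Z0)

lemma all_V_iff:
  assumes "\<And>x y. y \<in> Z0 \<Longrightarrow> P (x + y) \<longleftrightarrow> P x"
  shows "(\<forall>x\<in>V. P x) \<longleftrightarrow> (\<forall>x. P x)"
  by (metis Z0_V_decomp assms diff_add_cancel)

lemma jmap_V: "jm z x \<in> V"
  and inner_jmap_V: "w \<in> V \<Longrightarrow> inner (jm z x) w = inner z (br x w)"
proof -
  have "linear (br x)" using bilinear_br unfolding bilinear_def by blast
  then have "inner (adjoint (br x) z) w = inner z (br x w)" for w
    by (metis adjoint_works inner_commute)
  then have "\<exists>!u. u \<in> V \<and> (\<forall>w\<in>V. inner u w = inner z (br x w))"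
    using ex1_inner_representative[OF subspace_V, of "adjoint (br x) z"] by simp
  from theI'[OF this] show "jm z x \<in> V" "w \<in> V \<Longrightarrow> inner (jm z x) w = inner z (br x w)"
    unfolding jmap_def by auto
qed

lemma inner_jmap: "inner (jm z x) w = inner z (br x w)"
proof -
  obtain y where y: "y \<in> Z0" "w - y \<in> V" using Z0_V_decomp by blast
  have "inner (jm z x) y = 0" using jmap_V y(1) unfolding vv_def by auto
  then show ?thesis
    using inner_jmap_V[OF y(2), of z x] Z0_central(2)[OF y(1)]
    by (simp add: inner_diff_right)
qed

definition jsum :: "'a \<Rightarrow> 'a \<Rightarrow> 'a" where
  "jsum x y = br (J x) y + br x (J y)"

definition jdiff :: "'a \<Rightarrow> 'a \<Rightarrow> 'a" where
  "jdiff x y = br x y - br (J x) (J y)"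

definition nijenhuis :: "'a \<Rightarrow> 'a \<Rightarrow> 'a" where
  "nijenhuis x y = jdiff x y + J (jsum x y)"

lemma integrable_iff_nijenhuis: "integrable br J \<longleftrightarrow> (\<forall>x y. nijenhuis x y = 0)"
  unfolding integrable_def nijenhuis_def jsum_def jdiff_def by (simp add: algebra_simps)

lemma jsum_J_left: "jsum (J x) y = - jdiff x y"
  unfolding jsum_def jdiff_def by simp

lemma jsum_J_right: "jsum x (J y) = - jdiff x y"
  unfolding jsum_def jdiff_def by simp

lemma jsum_swap: "jsum y x = - jsum x y"
  unfolding jsum_def using br_anticomm by (metis add.commute minus_add_distrib)

lemma nijenhuis_J_left: "nijenhuis (J x) y = - J (nijenhuis x y)"
  unfolding nijenhuis_def jsum_def jdiff_def by (simp add: algebra_simps)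

lemma jsum_derived: "jsum x y \<in> D" and jdiff_derived: "jdiff x y \<in> D"
  unfolding jsum_def jdiff_def
  by (simp_all add: br_in_derived subspace_add subspace_diff subspace_derived)

lemma jsum_Z0_shift: "y \<in> Z0 \<Longrightarrow> jsum (x + y) w = jsum x w"
  and nijenhuis_Z0_shift: "y \<in> Z0 \<Longrightarrow> nijenhuis (x + y) w = nijenhuis x w"
  unfolding nijenhuis_def jsum_def jdiff_def by (simp_all add: Z0_central J_Z0)

lemma inner_J_nijenhuis: "inner (J z) (nijenhuis x y) = inner z (nijenhuis (J x) y)"
  by (simp add: nijenhuis_J_left inner_J_left)

lemma orthogonal_nijenhuis_J_iff:
  "(\<forall>x y. inner (J z) (nijenhuis x y) = 0) \<longleftrightarrow> (\<forall>x y. inner z (nijenhuis x y) = 0)"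
proof
  assume "\<forall>x y. inner (J z) (nijenhuis x y) = 0"
  moreover have "inner z (nijenhuis x y) = inner (J z) (nijenhuis (- J x) y)" for x y
    by (simp add: inner_J_nijenhuis)
  ultimately show "\<forall>x y. inner z (nijenhuis x y) = 0" by simp
qed (simp add: inner_J_nijenhuis)

lemma jmap_skew: "inner (jm z x) y = - inner x (jm z y)"
  by (metis br_anticomm inner_commute inner_minus_right inner_jmap)

lemma inner_jmap_commutator: "inner (jm z (J x) - J (jm z x)) w = inner z (jsum x w)"
  by (simp add: inner_diff_left inner_J_left inner_jmap jsum_def inner_add_right)

lemma in_u_jmap_iff: "in_u V J (jm z) \<longleftrightarrow> (\<forall>x w. inner z (jsum x w) = 0)"
proof -
  have "in_u V J (jm z) \<longleftrightarrow> (\<forall>x\<in>V. \<forall>w. inner z (jsum x w) = 0)"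
    by (subst in_u_iff_commutes) (simp_all add: jmap_V jmap_skew inner_jmap_commutator)
  also have "\<dots> \<longleftrightarrow> (\<forall>x w. inner z (jsum x w) = 0)"
    by (rule all_V_iff) (simp add: jsum_Z0_shift)
  finally show ?thesis .
qed

abbreviation jmap_corrected :: "'a \<Rightarrow> 'a \<Rightarrow> 'a" where
  "jmap_corrected z \<equiv> \<lambda>x. jm (J z) x - (1/2) *\<^sub>R opcomm J (jm z) x"

lemma inner_jmap_corrected:
  "inner (jmap_corrected z x) w = inner (J z) (br x w) + (1/2) * inner z (jsum x w)"
  unfolding opcomm_def jsum_def
  by (simp add: inner_diff_left inner_add_right inner_jmap inner_J_left algebra_simps)

lemma in_u_jmap_corrected_iff:
  "in_u V J (jmap_corrected z) \<longleftrightarrow> (\<forall>x w. inner z (nijenhuis x w) = 0)"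
proof -
  have maps_V: "\<forall>x\<in>V. jmap_corrected z x \<in> V"
    unfolding opcomm_def using jmap_V J_V subspace_V by (simp add: subspace_diff subspace_scale)
  have "inner (jmap_corrected z x) y = - inner x (jmap_corrected z y)" for x y
  proof -
    have "inner x (jmap_corrected z y) = inner (jmap_corrected z y) x" by (rule inner_commute)
    then show ?thesis
      by (simp only: inner_jmap_corrected br_anticomm[of y x] jsum_swap[of y x] inner_minus_right)
  qed
  then have skew: "\<forall>x\<in>V. \<forall>y\<in>V. inner (jmap_corrected z x) y = - inner x (jmap_corrected z y)"
    by blast
  have commutator: "inner (jmap_corrected z (J x) - J (jmap_corrected z x)) w
      = - inner z (nijenhuis x w)" for x w
  proof -
    have "inner (jmap_corrected z (J x) - J (jmap_corrected z x)) w
        = inner (jmap_corrected z (J x)) w + inner (jmap_corrected z x) (J w)"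
      by (simp add: inner_diff_left inner_J_left)
    also have "\<dots> = inner (J z) (jsum x w) - inner z (jdiff x w)"
      by (simp add: inner_jmap_corrected jsum_J_left jsum_J_right jsum_def jdiff_def
          inner_add_right inner_diff_right)
    also have "\<dots> = - inner z (nijenhuis x w)"
      by (simp add: nijenhuis_def inner_J_left inner_add_right)
    finally show ?thesis .
  qed
  have "in_u V J (jmap_corrected z) \<longleftrightarrow> (\<forall>x\<in>V. \<forall>w. inner z (nijenhuis x w) = 0)"
    unfolding in_u_iff_commutes[OF maps_V skew] commutator by simp
  also have "\<dots> \<longleftrightarrow> (\<forall>x w. inner z (nijenhuis x w) = 0)"
    by (rule all_V_iff) (simp add: nijenhuis_Z0_shift)
  finally show ?thesis .
qed

lemma minus_part_jmap_iff:
  "(\<forall>x\<in>V. minus_part J (jm (J z)) x = (1/2) *\<^sub>R opcomm J (jm z) x)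
    \<longleftrightarrow> (\<forall>x w. inner z (nijenhuis x w) = 0)"
proof -
  have minus_part: "inner (minus_part J (jm (J z)) x) w = (1/2) * inner (J z) (jdiff x w)" for x w
    unfolding minus_part_def jdiff_def
    by (simp add: inner_add_left inner_diff_right inner_jmap inner_J_left[of "jm (J z) (J x)"])
  have commutator: "inner ((1/2) *\<^sub>R opcomm J (jm z) x) w = - (1/2) * inner z (jsum x w)" for x w
    unfolding opcomm_def jsum_def
    by (simp add: inner_add_right inner_jmap inner_J_left[of "jm z x"] algebra_simps)
  have difference: "inner (minus_part J (jm (J z)) x - (1/2) *\<^sub>R opcomm J (jm z) x) w
      = (1/2) * inner (J z) (nijenhuis x w)" for x w
    unfolding inner_diff_left minus_part commutator nijenhuis_def by (simp add: inner_add_right)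
  have "(\<forall>x\<in>V. minus_part J (jm (J z)) x = (1/2) *\<^sub>R opcomm J (jm z) x)
      \<longleftrightarrow> (\<forall>x\<in>V. \<forall>w. inner (J z) (nijenhuis x w) = 0)"
    using all_inner_diff_eq_0_iff
        [of "minus_part J (jm (J z)) x" "(1/2) *\<^sub>R opcomm J (jm z) x" for x]
    unfolding difference by simp
  also have "\<dots> \<longleftrightarrow> (\<forall>x w. inner (J z) (nijenhuis x w) = 0)"
    by (rule all_V_iff) (simp add: nijenhuis_Z0_shift)
  finally show ?thesis by (simp only: orthogonal_nijenhuis_J_iff)
qed

lemma subspace_nJ: "subspace NJ"
  unfolding nJ_def
  by (rule subspace_inter[OF subspace_derived linear_subspace_image[OF linear_J subspace_derived]])

lemma nJ_derived: "NJ \<subseteq> D"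
  unfolding nJ_def by blast

lemma J_nJ: "y \<in> NJ \<Longrightarrow> J y \<in> NJ"
proof -
  assume "y \<in> NJ"
  then obtain c where "y \<in> D" "c \<in> D" "y = J c" unfolding nJ_def by blast
  then have "J y \<in> D" using subspace_neg[OF subspace_derived] by simp
  with \<open>y \<in> D\<close> show "J y \<in> NJ" unfolding nJ_def by blast
qed

lemma orthogonal_Z1_iff_in_nJ:
  "(\<forall>z\<in>Z1. \<forall>x w. inner z (jsum x w) = 0) \<longleftrightarrow> (\<forall>x w. jsum x w \<in> NJ)"
proof
  assume "\<forall>z\<in>Z1. \<forall>x w. inner z (jsum x w) = 0"
  then show "\<forall>x w. jsum x w \<in> NJ"
    using in_subspace_if_orthogonal_to_complement
        [OF subspace_derived subspace_nJ nJ_derived jsum_derived]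
    unfolding zz1_def by blast
qed (auto simp: zz1_def)

lemma integrable_imp_jsum_nJ:
  assumes "integrable br J"
  shows "jsum x w \<in> NJ"
proof -
  have "jdiff x w + J (jsum x w) = 0"
    using assms unfolding integrable_iff_nijenhuis nijenhuis_def by blast
  then have "J (jdiff x w + J (jsum x w)) = 0" by simp
  then have "J (jdiff x w) = jsum x w" by simp
  then show ?thesis
    unfolding nJ_def using jsum_derived jdiff_derived by (metis IntI imageI)
qed

lemma nijenhuis_nJ:
  assumes "\<forall>x w. jsum x w \<in> NJ"
  shows "nijenhuis x w \<in> NJ"
proof -
  have "jdiff x w = - jsum (J x) w" by (simp add: jsum_J_left)
  then show ?thesis
    unfolding nijenhuis_def using assms J_nJ subspace_nJ by (metis subspace_add subspace_neg)
qed

lemma integrable_iff_nJ_conditions: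
  assumes nJ_eq: "NJ = {u + J w | u w. u \<in> b \<and> w \<in> b}"
  shows "integrable br J \<longleftrightarrow>
    (\<forall>x w. jsum x w \<in> NJ) \<and> (\<forall>z\<in>b. \<forall>x w. inner z (nijenhuis x w) = 0)"
proof (intro iffI conjI)
  assume "integrable br J"
  then show "\<forall>x w. jsum x w \<in> NJ" "\<forall>z\<in>b. \<forall>x w. inner z (nijenhuis x w) = 0"
    using integrable_imp_jsum_nJ integrable_iff_nijenhuis by auto
next
  assume conds: "(\<forall>x w. jsum x w \<in> NJ) \<and> (\<forall>z\<in>b. \<forall>x w. inner z (nijenhuis x w) = 0)"
  have "nijenhuis x w = 0" for x w
  proof -
    have "inner y (nijenhuis x w) = 0" if "y \<in> NJ" for y
    proof -
      obtain u v where "y = u + J v" "u \<in> b" "v \<in> b" using \<open>y \<in> NJ\<close> nJ_eq by blast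
      moreover have "inner (J v) (nijenhuis x w) = 0"
        using conds \<open>v \<in> b\<close> orthogonal_nijenhuis_J_iff by blast
      ultimately show ?thesis using conds by (simp add: inner_add_left)
    qed
    then have "inner (nijenhuis x w) (nijenhuis x w) = 0"
      using nijenhuis_nJ conds by blast
    then show ?thesis by simp
  qed
  then show "integrable br J" by (simp add: integrable_iff_nijenhuis)
qed

end

theorem mainTheorem12:
  fixes br :: "'a::euclidean_space \<Rightarrow> 'a \<Rightarrow> 'a" and J :: "'a \<Rightarrow> 'a" and b :: "'a set"
  assumes "two_step_nilpotent br"
    and "linear J" and "\<forall>x. J (J x) = - x"
    and "J ` derived br \<subseteq> center br"
    and "\<forall>x y. inner (J x) (J y) = inner x y"
    and "subspace b" and "b \<subseteq> nJ br J"
    and "nJ br J = {u + J w | u w. u \<in> b \<and> w \<in> b}"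
    and "\<forall>u\<in>b. \<forall>w\<in>b. inner u (J w) = 0"
  shows "(integrable br J \<longleftrightarrow>
            (\<forall>z \<in> zz1 br J. in_u (vv br J) J (jmap br J z)) \<and>
            (\<forall>z \<in> b. in_u (vv br J) J
                (\<lambda>x. jmap br J (J z) x - (1/2) *\<^sub>R opcomm J (jmap br J z) x)))
       \<and> (integrable br J \<longleftrightarrow>
            (\<forall>z \<in> zz1 br J. in_u (vv br J) J (jmap br J z)) \<and>
            (\<forall>z \<in> b. \<forall>x \<in> vv br J.
                minus_part J (jmap br J (J z)) x = (1/2) *\<^sub>R opcomm J (jmap br J z) x))"
proof -
  interpret two_step_almost_hermitian br J
    by (rule two_step_almost_hermitian.intro) (use assms in auto)
  have "(\<forall>z \<in> zz1 br J. in_u (vv br J) J (jmap br J z)) \<longleftrightarrow> (\<forall>x w. jsum x w \<in> nJ br J)"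
    unfolding in_u_jmap_iff orthogonal_Z1_iff_in_nJ ..
  then show ?thesis
    using integrable_iff_nJ_conditions[OF assms(8)] in_u_jmap_corrected_iff minus_part_jmap_iff
    by simp
qed

end
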